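(* For every $n\ge1$, $\mathcal{C}^*(n)\le 1-L(n)$, where $L(n)$ is the optimal value of the following linear program in variables $y_0,\dots,y_{\lfloor n/2\rfloor}\in\mathbb{R}$: minimize $3^ny_0$ subject to $y_j\ge0$ for all $j$, $\sum_{j=0}^{\lfloor n/2\rfloor}K_i(2j)y_j\ge0$ for all $i=0,\dots,n$, and $\sum_{j=0}^{\lfloor n/2\rfloor}3^{n-2j}y_j=1$.
   Context: The concentratable entanglement of an $n$-qubit pure state is $\mathcal{C}(\ket{\psi})=1-\frac{1}{2^{n}}\sum_{\alpha\subseteq [n]}\mathrm{Tr}[\rho_\alpha^2]$ ($\rho_\alpha$ the reduced state on $\alpha$, $\mathrm{Tr}[\rho_\emptyset^2]=1$), and $\mathcal{C}^*(n)=\max_{\ket{\psi}\in(\mathbb{C}^2)^{\otimes n}}\mathcal{C}(\ket{\psi})$. The quaternary Krawtchouk polynomials are $K_w(l)=\sum_{j=0}^{w}\binom{l}{j}\binom{n-l}{w-j}(-1)^j3^{w-j}$ for $w,l\in\{0,\dots,n\}$. *)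

theory Defs
  imports Complex_Main
begin

(* Qubits are indexed by {..<n}; a computational basis state is identified with the
   set x \<subseteq> {..<n} of qubits in state |1>.  A state vector is psi :: nat set \<Rightarrow> complex
   (values outside Pow {..<n} are irrelevant). *)

definition pure_state :: "nat \<Rightarrow> (nat set \<Rightarrow> complex) \<Rightarrow> bool" where
  "pure_state n psi \<longleftrightarrow> (\<Sum>x\<in>Pow {..<n}. (cmod (psi x))^2) = 1"

(* matrix entry <a|rho_alpha|a'> of the reduced state on alpha, a, a' \<subseteq> alpha
   (partial trace over the complement of alpha) *)
definition reduced_state ::
  "nat \<Rightarrow> (nat set \<Rightarrow> complex) \<Rightarrow> nat set \<Rightarrow> nat set \<Rightarrow> nat set \<Rightarrow> complex" where
  "reduced_state n psi alpha a a' =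
     (\<Sum>b\<in>Pow ({..<n} - alpha). psi (a \<union> b) * cnj (psi (a' \<union> b)))"

definition purity :: "nat \<Rightarrow> (nat set \<Rightarrow> complex) \<Rightarrow> nat set \<Rightarrow> real" where
  "purity n psi alpha =
     Re (\<Sum>a\<in>Pow alpha. \<Sum>a'\<in>Pow alpha.
            reduced_state n psi alpha a a' * reduced_state n psi alpha a' a)"

definition conc_ent :: "nat \<Rightarrow> (nat set \<Rightarrow> complex) \<Rightarrow> real" where
  "conc_ent n psi = 1 - (1 / 2^n) * (\<Sum>alpha\<in>Pow {..<n}. purity n psi alpha)"

definition conc_ent_max :: "nat \<Rightarrow> real" where
  "conc_ent_max n = (SUP psi\<in>{psi. pure_state n psi}. conc_ent n psi)"

definition kraw :: "nat \<Rightarrow> nat \<Rightarrow> nat \<Rightarrow> real" where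
  "kraw n w l = (\<Sum>j=0..w. real (l choose j) * real ((n - l) choose (w - j))
                              * (-1)^j * 3^(w - j))"

definition lp_feasible :: "nat \<Rightarrow> (nat \<Rightarrow> real) \<Rightarrow> bool" where
  "lp_feasible n y \<longleftrightarrow>
     (\<forall>j\<le>n div 2. y j \<ge> 0) \<and>
     (\<forall>i\<le>n. (\<Sum>j=0..n div 2. kraw n i (2*j) * y j) \<ge> 0) \<and>
     (\<Sum>j=0..n div 2. 3^(n - 2*j) * y j) = 1"

definition LP_val :: "nat \<Rightarrow> real" where
  "LP_val n = (INF y\<in>{y. lp_feasible n y}. 3^n * y 0)"

end

theory Submission
  imports Defs
begin

text \<open>
  For a pure state \<open>\<psi>\<close> and \<open>T \<subseteq> [n]\<close> let \<open>x\<^sub>T = 2\<^sup>-\<^sup>n \<Sum>\<^sub>g (-1)\<^bsup>|g \<inter> T|\<^esup> Tr[\<rho>\<^sub>g\<^sup>2]\<close>: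
  the probability that the parallel SWAP test on \<open>\<psi> \<otimes> \<psi>\<close> reports "antisymmetric" exactly on
  the qubits in \<open>T\<close>, i.e. the squared norm of the projection of \<open>\<psi> \<otimes> \<psi>\<close> onto the corresponding
  joint eigenspace of the qubit-wise SWAPs. Hence \<open>x\<^sub>T \<ge> 0\<close>, \<open>\<Sum>\<^sub>T x\<^sub>T = Tr[\<rho>\<^sub>\<emptyset>\<^sup>2] = 1\<close> and
  \<open>x\<^sub>\<emptyset> = 1 - C(\<psi>)\<close>; moreover \<open>x\<^sub>T = 0\<close> for odd \<open>|T|\<close>, because \<open>Tr[\<rho>\<^sub>g\<^sup>2]\<close> does not change
  when \<open>g\<close> is replaced by its complement. So \<open>y\<^sub>j = 3\<^bsup>2j - n\<^esup> (\<Sum>\<^bsub>|T| = 2j\<^esub> x\<^sub>T)\<close> satisfies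
  the equality constraint and has objective value \<open>3\<^sup>n y\<^sub>0 = 1 - C(\<psi>)\<close>. For the Krawtchouk
  constraints, expand \<open>Tr[\<rho>\<^sub>g\<^sup>2]\<close> in the squared Pauli expectations \<open>|\<langle>\<psi>|Z\<^sup>zX\<^sup>x|\<psi>\<rangle>|\<^sup>2\<close>:
  the \<open>i\<close>-th constraint becomes a combination of these whose coefficients factor over the
  qubits into nonnegative factors.
\<close>

section \<open>Sums over subsets\<close>

lemma prod_if_eq_power_card:
  assumes "finite A"
  shows "(\<Prod>x\<in>A. if P x then c else 1) = c ^ card {x\<in>A. P x}"
  using assms by (simp add: prod.If_cases Int_def conj_commute)

lemma sum_Pow_prod_mem:
  fixes f :: "'a \<Rightarrow> bool \<Rightarrow> 'c::comm_semiring_1"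
  assumes "finite N"
  shows "(\<Sum>X\<in>Pow N. \<Prod>k\<in>N. f k (k \<in> X)) = (\<Prod>k\<in>N. f k True + f k False)"
proof -
  have "(\<Prod>k\<in>N. f k (k \<in> X)) = (\<Prod>k\<in>X. f k True) * (\<Prod>k\<in>N - X. f k False)"
    if "X \<in> Pow N" for X
  proof -
    have "(\<Prod>k\<in>N. f k (k \<in> X)) = (\<Prod>k\<in>N - X. f k (k \<in> X)) * (\<Prod>k\<in>X. f k (k \<in> X))"
      using that assms by (intro prod.subset_diff) auto
    also have "\<dots> = (\<Prod>k\<in>N - X. f k False) * (\<Prod>k\<in>X. f k True)"
      by (intro arg_cong2[where f = "(*)"] prod.cong) auto
    finally show ?thesis by (simp add: mult.commute)
  qed
  then show ?thesis
    using prod_add[OF assms, of "\<lambda>k. f k True" "\<lambda>k. f k False"] by simp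
qed

lemma sum_Pow_Pow_prod_mem:
  fixes f :: "'a \<Rightarrow> bool \<Rightarrow> bool \<Rightarrow> 'c::comm_semiring_1"
  assumes "finite N"
  shows "(\<Sum>X\<in>Pow N. \<Sum>Y\<in>Pow N. \<Prod>k\<in>N. f k (k \<in> X) (k \<in> Y))
           = (\<Prod>k\<in>N. f k True True + f k True False + f k False True + f k False False)"
proof -
  have "(\<Sum>X\<in>Pow N. \<Sum>Y\<in>Pow N. \<Prod>k\<in>N. f k (k \<in> X) (k \<in> Y))
          = (\<Sum>X\<in>Pow N. \<Prod>k\<in>N. f k (k \<in> X) True + f k (k \<in> X) False)"
    by (rule sum.cong[OF refl], rule sum_Pow_prod_mem[OF assms])
  also have "\<dots> = (\<Prod>k\<in>N. f k True True + f k True False + (f k False True + f k False False))"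
    by (rule sum_Pow_prod_mem[OF assms])
  finally show ?thesis
    by (simp add: add.assoc)
qed

lemma sum_Pow_neg1_power_card_Int:
  assumes "finite A"
  shows "(\<Sum>X\<in>Pow A. (-1::'c::comm_ring_1) ^ card (X \<inter> D))
           = (if A \<inter> D = {} then 2 ^ card A else 0)"
proof -
  have "(-1::'c) ^ card (X \<inter> D) = (\<Prod>k\<in>A. if k \<in> D \<and> k \<in> X then -1 else 1)"
    if "X \<in> Pow A" for X
  proof -
    have "{k \<in> A. k \<in> D \<and> k \<in> X} = X \<inter> D"
      using that by auto
    then show ?thesis
      by (simp add: prod_if_eq_power_card[OF assms])
  qed
  then have "(\<Sum>X\<in>Pow A. (-1::'c) ^ card (X \<inter> D))
               = (\<Prod>k\<in>A. (if k \<in> D then -1 else 1) + 1)"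
    using sum_Pow_prod_mem[OF assms, of "\<lambda>k b. if k \<in> D \<and> b then -1 else 1"] by simp
  also have "\<dots> = (if A \<inter> D = {} then 2 ^ card A else 0)"
  proof (cases "A \<inter> D = {}")
    case True
    then have "(\<Prod>k\<in>A. (if k \<in> D then -1 else 1) + 1) = (\<Prod>k\<in>A. 2::'c)"
      by (intro prod.cong) auto
    with True show ?thesis by simp
  next
    case False
    then have "(\<Prod>k\<in>A. (if k \<in> D then -1 else 1) + (1::'c)) = 0"
      using assms by (intro prod_zero) auto
    with False show ?thesis by simp
  qed
  finally show ?thesis .
qed

lemma neg1_power_card_Int_eq_prod:
  assumes "finite T"
  shows "(-1::'c::comm_ring_1) ^ card (X \<inter> T) = (\<Prod>k\<in>T. if k \<in> X then -1 else 1)"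
  using assms by (simp add: prod_if_eq_power_card Int_def conj_commute)

lemma neg1_power_card_sym_diff_Int:
  assumes "finite T"
  shows "(-1::'c::comm_ring_1) ^ card (sym_diff a b \<inter> T)
           = (-1) ^ card (a \<inter> T) * (-1) ^ card (b \<inter> T)"
  unfolding neg1_power_card_Int_eq_prod[OF assms] prod.distrib[symmetric]
  by (intro prod.cong) auto

lemma sum_Pow_neg1_power_card_Int_mult:
  assumes "finite A"
  shows "(\<Sum>z\<in>Pow A. (-1::'c::comm_ring_1) ^ card (u \<inter> z) * (-1) ^ card (u' \<inter> z))
           = (if u \<inter> A = u' \<inter> A then 2 ^ card A else 0)"
proof -
  have "(\<Sum>z\<in>Pow A. (-1::'c) ^ card (u \<inter> z) * (-1) ^ card (u' \<inter> z))
          = (\<Sum>z\<in>Pow A. (-1) ^ card (z \<inter> sym_diff u u'))"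
  proof (rule sum.cong[OF refl])
    fix z assume "z \<in> Pow A"
    then have "finite z"
      using assms finite_subset by auto
    moreover have "sym_diff u u' \<inter> z = z \<inter> sym_diff u u'"
      by blast
    ultimately show "(-1::'c) ^ card (u \<inter> z) * (-1) ^ card (u' \<inter> z) = (-1) ^ card (z \<inter> sym_diff u u')"
      using neg1_power_card_sym_diff_Int by metis
  qed
  also have "\<dots> = (if A \<inter> sym_diff u u' = {} then 2 ^ card A else 0)"
    by (rule sum_Pow_neg1_power_card_Int[OF assms])
  also have "A \<inter> sym_diff u u' = {} \<longleftrightarrow> u \<inter> A = u' \<inter> A"
    by auto
  finally show ?thesis .
qed

lemma sum_Pow_Pow_neg1_sym_diff:
  fixes F :: "'a set \<Rightarrow> 'c::comm_ring_1"
  assumes "finite N" "finite T"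
  shows "(\<Sum>a\<in>Pow N. \<Sum>b\<in>Pow N. (-1) ^ card (a \<inter> T) * (-1) ^ card (b \<inter> T) * F (sym_diff a b))
           = 2 ^ card N * (\<Sum>g\<in>Pow N. (-1) ^ card (g \<inter> T) * F g)"
proof -
  let ?s = "\<lambda>a. (-1::'c) ^ card (a \<inter> T)"
  have inv: "sym_diff a (sym_diff a g) = g" for a g :: "'a set"
    by auto
  have "(\<Sum>b\<in>Pow N. ?s a * ?s b * F (sym_diff a b)) = (\<Sum>g\<in>Pow N. ?s g * F g)"
    if "a \<in> Pow N" for a
  proof -
    have "(\<Sum>b\<in>Pow N. ?s a * ?s b * F (sym_diff a b))
            = (\<Sum>g\<in>Pow N. ?s a * ?s (sym_diff a g) * F g)"
      by (rule sum.reindex_bij_witness[where i = "sym_diff a" and j = "sym_diff a"])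
         (use that in \<open>auto simp: inv\<close>)
    also have "\<dots> = (\<Sum>g\<in>Pow N. ?s g * F g)"
    proof (intro sum.cong refl)
      fix g
      have "?s a * ?s a = 1"
        by (simp add: power_mult_distrib[symmetric])
      then show "?s a * ?s (sym_diff a g) * F g = ?s g * F g"
        by (simp add: neg1_power_card_sym_diff_Int[OF assms(2)] mult.assoc[symmetric])
    qed
    finally show ?thesis .
  qed
  then show ?thesis
    using assms(1) by (simp add: card_Pow)
qed

lemma sum_Pow_split:
  assumes "A \<subseteq> N" "finite N"
  shows "(\<Sum>u\<in>Pow N. f u) = (\<Sum>a\<in>Pow A. \<Sum>b\<in>Pow (N - A). f (a \<union> b))"
proof -
  have "bij_betw (\<lambda>(a, b). a \<union> b) (Pow A \<times> Pow (N - A)) (Pow N)"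
    by (rule bij_betw_byWitness[where f' = "\<lambda>u. (u \<inter> A, u - A)"]) (use assms in auto)
  then have "(\<Sum>u\<in>Pow N. f u) = (\<Sum>(a, b)\<in>Pow A \<times> Pow (N - A). f (a \<union> b))"
    by (simp add: sum.reindex_bij_betw[symmetric] case_prod_unfold)
  then show ?thesis
    by (simp add: sum.cartesian_product)
qed

lemma sum_Pow_Pow_agree_on:
  assumes "A \<subseteq> N" "finite N"
  shows "(\<Sum>u\<in>Pow N. \<Sum>u'\<in>Pow N. if u \<inter> A = u' \<inter> A then G u u' else 0)
           = (\<Sum>a\<in>Pow A. \<Sum>b\<in>Pow (N - A). \<Sum>b'\<in>Pow (N - A). G (a \<union> b) (a \<union> b'))"
proof -
  have restrict: "(a \<union> b) \<inter> A = a" if "a \<in> Pow A" "b \<in> Pow (N - A)" for a b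
    using that by auto
  have "(\<Sum>u\<in>Pow N. \<Sum>u'\<in>Pow N. if u \<inter> A = u' \<inter> A then G u u' else 0)
          = (\<Sum>a\<in>Pow A. \<Sum>b\<in>Pow (N - A). \<Sum>a'\<in>Pow A. \<Sum>b'\<in>Pow (N - A).
               if a = a' then G (a \<union> b) (a' \<union> b') else 0)"
    unfolding sum_Pow_split[OF assms] by (intro sum.cong refl) (simp add: restrict)
  also have "\<dots> = (\<Sum>a\<in>Pow A. \<Sum>b\<in>Pow (N - A). \<Sum>b'\<in>Pow (N - A). G (a \<union> b) (a \<union> b'))"
  proof (intro sum.cong[OF refl])
    fix a b assume a: "a \<in> Pow A"
    have "(\<Sum>a'\<in>Pow A. \<Sum>b'\<in>Pow (N - A). if a = a' then G (a \<union> b) (a' \<union> b') else 0)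
            = (\<Sum>a'\<in>Pow A. if a = a' then \<Sum>b'\<in>Pow (N - A). G (a \<union> b) (a' \<union> b') else 0)"
      by (intro sum.cong refl) simp
    also have "\<dots> = (\<Sum>b'\<in>Pow (N - A). G (a \<union> b) (a \<union> b'))"
      using a finite_subset[OF assms] by (simp add: sum.delta)
    finally show "(\<Sum>a'\<in>Pow A. \<Sum>b'\<in>Pow (N - A). if a = a' then G (a \<union> b) (a' \<union> b') else 0)
                    = (\<Sum>b'\<in>Pow (N - A). G (a \<union> b) (a \<union> b'))" .
  qed
  finally show ?thesis .
qed

lemma sum_Pow_even_card:
  "(\<Sum>j=0..n div 2. \<Sum>T\<in>{T\<in>Pow {..<n}. card T = 2 * j}. f T)
     = (\<Sum>T\<in>{T\<in>Pow {..<n}. even (card T)}. f T)"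
proof -
  have "card T \<le> n" if "T \<subseteq> {..<n}" for T
    using that card_mono[of "{..<n}" T] by simp
  then have "(\<Sum>T\<in>{T\<in>Pow {..<n}. even (card T)}. f T)
               = (\<Sum>j\<in>{0..n div 2}. \<Sum>T\<in>{T\<in>{T\<in>Pow {..<n}. even (card T)}. card T div 2 = j}. f T)"
    by (intro sum.group[symmetric]) (auto simp: div_le_mono)
  also have "\<dots> = (\<Sum>j=0..n div 2. \<Sum>T\<in>{T\<in>Pow {..<n}. card T = 2 * j}. f T)"
    by (intro sum.cong refl arg_cong[where f = "sum f"]) auto
  finally show ?thesis ..
qed

section \<open>Krawtchouk polynomials as sums over subsets\<close>

lemma card_subsets_card_Int:
  assumes "T \<subseteq> N" "finite N" "j \<le> i"
  shows "card {S\<in>Pow N. card S = i \<and> card (S \<inter> T) = j}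
           = (card T choose j) * (card (N - T) choose (i - j))"
proof -
  have fin: "finite T" "finite (N - T)"
    using assms finite_subset by auto
  have "bij_betw (\<lambda>(a, b). a \<union> b)
          ({a. a \<subseteq> T \<and> card a = j} \<times> {b. b \<subseteq> N - T \<and> card b = i - j})
          {S\<in>Pow N. card S = i \<and> card (S \<inter> T) = j}"
  proof (rule bij_betw_byWitness[where f' = "\<lambda>S. (S \<inter> T, S - T)"])
    have "card S = card (S \<inter> T) + card (S - T)" if "S \<subseteq> N" for S
      using that assms by (metis card_Int_Diff finite_subset)
    then show "(\<lambda>S. (S \<inter> T, S - T)) ` {S\<in>Pow N. card S = i \<and> card (S \<inter> T) = j}
                 \<subseteq> {a. a \<subseteq> T \<and> card a = j} \<times> {b. b \<subseteq> N - T \<and> card b = i - j}"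
      by auto
    have "card (a \<union> b) = card a + card b" if "a \<subseteq> T" "b \<subseteq> N - T" for a b
      using that fin by (intro card_Un_disjoint) (auto intro: finite_subset)
    moreover have "(a \<union> b) \<inter> T = a" if "a \<subseteq> T" "b \<subseteq> N - T" for a b
      using that by auto
    ultimately show "(\<lambda>(a, b). a \<union> b) ` ({a. a \<subseteq> T \<and> card a = j} \<times> {b. b \<subseteq> N - T \<and> card b = i - j})
                       \<subseteq> {S\<in>Pow N. card S = i \<and> card (S \<inter> T) = j}"
      using assms by auto
  qed auto
  then show ?thesis
    by (simp add: bij_betw_same_card[symmetric] card_cartesian_product n_subsets fin)
qed

lemma kraw_eq_sum_subsets:
  assumes "T \<subseteq> {..<n}"
  shows "kraw n i (card T)
           = (\<Sum>S\<in>{S\<in>Pow {..<n}. card S = i}. (-1) ^ card (S \<inter> T) * 3 ^ card (S - T))"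
proof -
  let ?A = "{S\<in>Pow {..<n}. card S = i}"
  let ?A\<^sub>j = "\<lambda>j. {S\<in>Pow {..<n}. card S = i \<and> card (S \<inter> T) = j}"
  have card_split: "card S = card (S \<inter> T) + card (S - T)" if "S \<subseteq> {..<n}" for S
    using that by (metis card_Int_Diff finite_lessThan finite_subset)
  have "(\<Sum>S\<in>?A. (-1::real) ^ card (S \<inter> T) * 3 ^ card (S - T))
          = (\<Sum>j\<in>{0..i}. \<Sum>S\<in>{S\<in>?A. card (S \<inter> T) = j}. (-1) ^ card (S \<inter> T) * 3 ^ card (S - T))"
    by (rule sum.group[symmetric]) (use card_split in fastforce)+
  also have "\<dots> = (\<Sum>j\<in>{0..i}. real (card (?A\<^sub>j j)) * ((-1) ^ j * 3 ^ (i - j)))"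
  proof (intro sum.cong refl)
    fix j
    have "(-1::real) ^ card (S \<inter> T) * 3 ^ card (S - T) = (-1) ^ j * 3 ^ (i - j)"
      if "S \<in> ?A\<^sub>j j" for S
      using that card_split[of S] by auto
    then show "(\<Sum>S\<in>{S\<in>?A. card (S \<inter> T) = j}. (-1::real) ^ card (S \<inter> T) * 3 ^ card (S - T))
                 = real (card (?A\<^sub>j j)) * ((-1) ^ j * 3 ^ (i - j))"
      by (simp add: conj_assoc)
  qed
  also have "\<dots> = kraw n i (card T)"
  proof -
    have "real (card (?A\<^sub>j j)) = real (card T choose j) * real ((n - card T) choose (i - j))"
      if "j \<le> i" for j
      using card_subsets_card_Int[OF assms finite_lessThan that] assms
      by (simp add: card_Diff_subset finite_subset)
    then show ?thesis
      unfolding kraw_def by (intro sum.cong refl) simp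
  qed
  finally show ?thesis ..
qed

section \<open>Purities as swap expectations\<close>

text \<open>
  A pair \<open>(u, v)\<close> is the basis state \<open>|u\<rangle>|v\<rangle>\<close> of two copies of the register;
  \<open>swap_on g\<close> exchanges the two copies on the qubits in \<open>g\<close>.
\<close>

fun swap_on :: "nat set \<Rightarrow> nat set \<times> nat set \<Rightarrow> nat set \<times> nat set" where
  "swap_on g (u, v) = ((u - g) \<union> (v \<inter> g), (v - g) \<union> (u \<inter> g))"

fun tensor_square :: "(nat set \<Rightarrow> complex) \<Rightarrow> nat set \<times> nat set \<Rightarrow> complex" where
  "tensor_square psi (u, v) = psi u * psi v"

lemma swap_on_swap_on: "swap_on a (swap_on b p) = swap_on (sym_diff a b) p"
  by (cases p) auto

lemma swap_on_empty: "swap_on {} p = p"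
  by (cases p) auto

lemma swap_on_in_Pow_Times: "p \<in> Pow N \<times> Pow N \<Longrightarrow> swap_on g p \<in> Pow N \<times> Pow N"
  by (cases p) auto

definition trace_sq :: "nat \<Rightarrow> (nat set \<Rightarrow> complex) \<Rightarrow> nat set \<Rightarrow> complex" where
  "trace_sq n psi A =
     (\<Sum>a\<in>Pow A. \<Sum>a'\<in>Pow A. reduced_state n psi A a a' * reduced_state n psi A a' a)"

lemma purity_eq_Re_trace_sq: "purity n psi A = Re (trace_sq n psi A)"
  by (simp add: purity_def trace_sq_def)

lemma trace_sq_expand:
  "trace_sq n psi A = (\<Sum>a\<in>Pow A. \<Sum>a'\<in>Pow A. \<Sum>b\<in>Pow ({..<n} - A). \<Sum>b'\<in>Pow ({..<n} - A).
      psi (a \<union> b) * cnj (psi (a' \<union> b)) * psi (a' \<union> b') * cnj (psi (a \<union> b')))"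
  unfolding trace_sq_def reduced_state_def
  by (simp add: sum_product mult.assoc mult.left_commute)

definition swap_expectation :: "nat \<Rightarrow> (nat set \<Rightarrow> complex) \<Rightarrow> nat set \<Rightarrow> complex" where
  "swap_expectation n psi g =
     (\<Sum>p\<in>Pow {..<n} \<times> Pow {..<n}. tensor_square psi (swap_on g p) * cnj (tensor_square psi p))"

lemma swap_expectation_eq_trace_sq:
  assumes "g \<subseteq> {..<n}"
  shows "swap_expectation n psi g = trace_sq n psi g"
proof -
  let ?C = "{..<n} - g"
  have "swap_expectation n psi g
          = (\<Sum>u\<in>Pow {..<n}. \<Sum>v\<in>Pow {..<n}. tensor_square psi (swap_on g (u, v)) * cnj (tensor_square psi (u, v)))"
    unfolding swap_expectation_def sum.cartesian_product by (rule sum.cong) auto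
  also have "\<dots> = (\<Sum>a\<in>Pow g. \<Sum>b\<in>Pow ?C. \<Sum>a'\<in>Pow g. \<Sum>b'\<in>Pow ?C.
        tensor_square psi (swap_on g (a \<union> b, a' \<union> b')) * cnj (tensor_square psi (a \<union> b, a' \<union> b')))"
    by (simp add: sum_Pow_split[OF assms])
  also have "\<dots> = (\<Sum>a\<in>Pow g. \<Sum>b\<in>Pow ?C. \<Sum>a'\<in>Pow g. \<Sum>b'\<in>Pow ?C.
        psi (a' \<union> b) * psi (a \<union> b') * cnj (psi (a \<union> b)) * cnj (psi (a' \<union> b')))"
  proof (intro sum.cong refl)
    fix a b a' b' assume "a \<in> Pow g" "b \<in> Pow ?C" "a' \<in> Pow g" "b' \<in> Pow ?C"
    then have "swap_on g (a \<union> b, a' \<union> b') = (a' \<union> b, a \<union> b')"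
      by auto
    then show "tensor_square psi (swap_on g (a \<union> b, a' \<union> b')) * cnj (tensor_square psi (a \<union> b, a' \<union> b'))
                 = psi (a' \<union> b) * psi (a \<union> b') * cnj (psi (a \<union> b)) * cnj (psi (a' \<union> b'))"
      by simp
  qed
  also have "\<dots> = (\<Sum>a'\<in>Pow g. \<Sum>a\<in>Pow g. \<Sum>b\<in>Pow ?C. \<Sum>b'\<in>Pow ?C.
        psi (a' \<union> b) * psi (a \<union> b') * cnj (psi (a \<union> b)) * cnj (psi (a' \<union> b')))"
    by (subst sum.swap) (intro sum.cong refl sum.swap)
  also have "\<dots> = trace_sq n psi g"
    unfolding trace_sq_expand by (intro sum.cong refl) (simp add: algebra_simps)
  finally show ?thesis .
qed

lemma swap_expectation_compl:
  assumes "g \<subseteq> {..<n}"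
  shows "swap_expectation n psi ({..<n} - g) = swap_expectation n psi g"
  unfolding swap_expectation_def
proof (intro sum.cong refl)
  fix p assume "p \<in> Pow {..<n} \<times> Pow {..<n}"
  then have "swap_on ({..<n} - g) p = prod.swap (swap_on g p)"
    by (cases p) auto
  then show "tensor_square psi (swap_on ({..<n} - g) p) * cnj (tensor_square psi p)
               = tensor_square psi (swap_on g p) * cnj (tensor_square psi p)"
    by (cases "swap_on g p") simp
qed

lemma purity_compl:
  assumes "g \<subseteq> {..<n}"
  shows "purity n psi ({..<n} - g) = purity n psi g"
  using assms swap_expectation_compl[OF assms]
  by (simp add: purity_eq_Re_trace_sq swap_expectation_eq_trace_sq[symmetric])

lemma swap_expectation_sym_diff:
  "(\<Sum>p\<in>Pow {..<n} \<times> Pow {..<n}. tensor_square psi (swap_on a p) * cnj (tensor_square psi (swap_on b p)))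
     = swap_expectation n psi (sym_diff a b)"
proof -
  have "sym_diff (sym_diff a b) b = a" "sym_diff b b = {}"
    by auto
  then show ?thesis
    unfolding swap_expectation_def
    by (intro sum.reindex_bij_witness[where i = "swap_on b" and j = "swap_on b"])
       (simp_all add: swap_on_swap_on swap_on_empty swap_on_in_Pow_Times del: swap_on.simps)
qed

section \<open>The parallel SWAP test\<close>

text \<open>\<open>2\<^sup>n\<close> times the projection of \<open>\<psi> \<otimes> \<psi>\<close> onto the states that are antisymmetric
  exactly on the qubits in \<open>T\<close>.\<close>

definition swap_test_amplitude ::
  "nat \<Rightarrow> (nat set \<Rightarrow> complex) \<Rightarrow> nat set \<Rightarrow> nat set \<times> nat set \<Rightarrow> complex" where
  "swap_test_amplitude n psi T p =
     (\<Sum>a\<in>Pow {..<n}. (-1) ^ card (a \<inter> T) * tensor_square psi (swap_on a p))"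

lemma sum_cmod_sq_swap_test_amplitude:
  assumes "T \<subseteq> {..<n}"
  shows "(\<Sum>p\<in>Pow {..<n} \<times> Pow {..<n}. (cmod (swap_test_amplitude n psi T p))\<^sup>2)
           = 2 ^ n * (\<Sum>g\<in>Pow {..<n}. (-1) ^ card (g \<inter> T) * purity n psi g)"
proof -
  let ?U = "Pow {..<n}"
  let ?s = "\<lambda>a. (-1::complex) ^ card (a \<inter> T)"
  have "complex_of_real (\<Sum>p\<in>?U \<times> ?U. (cmod (swap_test_amplitude n psi T p))\<^sup>2)
          = (\<Sum>p\<in>?U \<times> ?U. \<Sum>a\<in>?U. \<Sum>b\<in>?U.
               ?s a * ?s b * (tensor_square psi (swap_on a p) * cnj (tensor_square psi (swap_on b p))))"
    unfolding of_real_sum complex_norm_square swap_test_amplitude_def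
    by (simp add: sum_product cnj_sum algebra_simps)
  also have "\<dots> = (\<Sum>a\<in>?U. \<Sum>b\<in>?U. \<Sum>p\<in>?U \<times> ?U.
               ?s a * ?s b * (tensor_square psi (swap_on a p) * cnj (tensor_square psi (swap_on b p))))"
    by (subst sum.swap) (simp add: sum.swap[of _ "?U \<times> ?U"])
  also have "\<dots> = (\<Sum>a\<in>?U. \<Sum>b\<in>?U. ?s a * ?s b * swap_expectation n psi (sym_diff a b))"
    by (intro sum.cong refl) (simp add: sum_distrib_left[symmetric] swap_expectation_sym_diff)
  also have "\<dots> = 2 ^ n * (\<Sum>g\<in>?U. ?s g * swap_expectation n psi g)"
    using sum_Pow_Pow_neg1_sym_diff[OF finite_lessThan finite_subset[OF assms finite_lessThan]]
    by simp
  finally have "Re (complex_of_real (\<Sum>p\<in>?U \<times> ?U. (cmod (swap_test_amplitude n psi T p))\<^sup>2))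
                  = Re (2 ^ n * (\<Sum>g\<in>?U. ?s g * swap_expectation n psi g))"
    by (rule arg_cong)
  moreover have "Re (swap_expectation n psi g) = purity n psi g" if "g \<in> ?U" for g
    using that by (simp add: purity_eq_Re_trace_sq swap_expectation_eq_trace_sq)
  ultimately show ?thesis
    by (simp add: sum_distrib_left)
qed

definition swap_test_prob :: "nat \<Rightarrow> (nat set \<Rightarrow> complex) \<Rightarrow> nat set \<Rightarrow> real" where
  "swap_test_prob n psi T = (\<Sum>g\<in>Pow {..<n}. (-1) ^ card (g \<inter> T) * purity n psi g) / 2 ^ n"

lemma swap_test_prob_nonneg:
  assumes "T \<subseteq> {..<n}"
  shows "swap_test_prob n psi T \<ge> 0"
proof -
  have "swap_test_prob n psi T
          = (\<Sum>p\<in>Pow {..<n} \<times> Pow {..<n}. (cmod (swap_test_amplitude n psi T p))\<^sup>2) / 2 ^ n / 2 ^ n"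
    by (simp add: swap_test_prob_def sum_cmod_sq_swap_test_amplitude[OF assms])
  then show ?thesis
    by (simp add: sum_nonneg)
qed

lemma swap_test_prob_odd:
  assumes "T \<subseteq> {..<n}" "odd (card T)"
  shows "swap_test_prob n psi T = 0"
proof -
  have fin: "finite T"
    using assms(1) finite_subset by blast
  have compl_compl: "{..<n} - ({..<n} - g) = g" if "g \<in> Pow {..<n}" for g
    using that by auto
  have "(\<Sum>g\<in>Pow {..<n}. (-1) ^ card (g \<inter> T) * purity n psi g)
          = (\<Sum>g\<in>Pow {..<n}. (-1) ^ card (({..<n} - g) \<inter> T) * purity n psi ({..<n} - g))"
    by (rule sum.reindex_bij_witness[where i = "\<lambda>g. {..<n} - g" and j = "\<lambda>g. {..<n} - g"])
       (auto simp: compl_compl)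
  also have "\<dots> = - (\<Sum>g\<in>Pow {..<n}. (-1) ^ card (g \<inter> T) * purity n psi g)"
  proof -
    have "({..<n} - g) \<inter> T = sym_diff T g \<inter> T" for g
      using assms(1) by auto
    then have "(-1::real) ^ card (({..<n} - g) \<inter> T) = - ((-1) ^ card (g \<inter> T))" for g
      using assms(2) by (simp add: neg1_power_card_sym_diff_Int[OF fin])
    then show ?thesis
      by (simp add: purity_compl sum_negf)
  qed
  finally show ?thesis
    by (simp add: swap_test_prob_def)
qed

lemma purity_empty:
  assumes "pure_state n psi"
  shows "purity n psi {} = 1"
proof -
  have "reduced_state n psi {} {} {} = (\<Sum>b\<in>Pow {..<n}. complex_of_real ((cmod (psi b))\<^sup>2))"
    unfolding reduced_state_def by (simp add: complex_norm_square del: of_real_power)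
  also have "\<dots> = 1"
    using assms unfolding pure_state_def of_real_sum[symmetric] by simp
  finally show ?thesis
    unfolding purity_def by simp
qed

lemma sum_swap_test_prob:
  assumes "pure_state n psi"
  shows "(\<Sum>T\<in>Pow {..<n}. swap_test_prob n psi T) = 1"
proof -
  have "(\<Sum>T\<in>Pow {..<n}. swap_test_prob n psi T)
          = (\<Sum>g\<in>Pow {..<n}. purity n psi g * (\<Sum>T\<in>Pow {..<n}. (-1) ^ card (T \<inter> g))) / 2 ^ n"
    unfolding swap_test_prob_def sum_divide_distrib[symmetric]
    by (subst sum.swap) (simp add: sum_distrib_left Int_commute mult.commute)
  also have "\<dots> = (\<Sum>g\<in>Pow {..<n}. if g = {} then purity n psi g * 2 ^ n else 0) / 2 ^ n"
  proof -
    have "{..<n} \<inter> g = {} \<longleftrightarrow> g = {}" if "g \<in> Pow {..<n}" for g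
      using that by auto
    then show ?thesis
      by (intro arg_cong2[where f = "(/)"] sum.cong refl) (simp add: sum_Pow_neg1_power_card_Int)
  qed
  also have "\<dots> = 1"
    by (simp add: purity_empty[OF assms])
  finally show ?thesis .
qed

lemma swap_test_prob_empty: "swap_test_prob n psi {} = 1 - conc_ent n psi"
  by (simp add: swap_test_prob_def conc_ent_def)

section \<open>Pauli expansion of the purities\<close>

definition pauli_expectation ::
  "nat \<Rightarrow> (nat set \<Rightarrow> complex) \<Rightarrow> nat set \<Rightarrow> nat set \<Rightarrow> complex" where
  "pauli_expectation n psi x z =
     (\<Sum>u\<in>Pow {..<n}. cnj (psi u) * (-1) ^ card (u \<inter> z) * psi (sym_diff u x))"

lemma sum_Z_cmod_sq_pauli_expectation:
  assumes A: "A \<subseteq> {..<n}"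
  shows "(\<Sum>z\<in>Pow A. complex_of_real ((cmod (pauli_expectation n psi x z))\<^sup>2))
           = 2 ^ card A * (\<Sum>a\<in>Pow A. \<Sum>b\<in>Pow ({..<n} - A). \<Sum>b'\<in>Pow ({..<n} - A).
               cnj (psi (a \<union> b)) * psi (sym_diff (a \<union> b) x)
                 * psi (a \<union> b') * cnj (psi (sym_diff (a \<union> b') x)))"
proof -
  let ?U = "Pow {..<n}"
  let ?F = "\<lambda>u u'. cnj (psi u) * psi (sym_diff u x) * psi u' * cnj (psi (sym_diff u' x))"
  have fin: "finite A"
    using A finite_subset by blast
  have "(\<Sum>z\<in>Pow A. complex_of_real ((cmod (pauli_expectation n psi x z))\<^sup>2))
          = (\<Sum>z\<in>Pow A. \<Sum>u\<in>?U. \<Sum>u'\<in>?U. ?F u u' * ((-1) ^ card (u \<inter> z) * (-1) ^ card (u' \<inter> z)))"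
  proof (rule sum.cong[OF refl])
    fix z
    show "complex_of_real ((cmod (pauli_expectation n psi x z))\<^sup>2)
            = (\<Sum>u\<in>?U. \<Sum>u'\<in>?U. ?F u u' * ((-1) ^ card (u \<inter> z) * (-1) ^ card (u' \<inter> z)))"
      unfolding complex_norm_square pauli_expectation_def sum_product cnj_sum
      by (simp add: algebra_simps)
  qed
  also have "\<dots> = (\<Sum>u\<in>?U. \<Sum>u'\<in>?U.
                     ?F u u' * (\<Sum>z\<in>Pow A. (-1) ^ card (u \<inter> z) * (-1) ^ card (u' \<inter> z)))"
    by (simp add: sum_distrib_left sum.swap[of _ "Pow A"])
  also have "\<dots> = (\<Sum>u\<in>?U. \<Sum>u'\<in>?U. ?F u u' * (if u \<inter> A = u' \<inter> A then 2 ^ card A else 0))"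
    by (simp only: sum_Pow_neg1_power_card_Int_mult[OF fin])
  also have "\<dots> = 2 ^ card A * (\<Sum>u\<in>?U. \<Sum>u'\<in>?U. if u \<inter> A = u' \<inter> A then ?F u u' else 0)"
    unfolding sum_distrib_left by (intro sum.cong refl) simp
  also have "\<dots> = 2 ^ card A * (\<Sum>a\<in>Pow A. \<Sum>b\<in>Pow ({..<n} - A). \<Sum>b'\<in>Pow ({..<n} - A).
                     ?F (a \<union> b) (a \<union> b'))"
    by (simp only: sum_Pow_Pow_agree_on[OF A finite_lessThan])
  finally show ?thesis .
qed

lemma sum_Pow_cmod_sq_pauli_expectation:
  assumes A: "A \<subseteq> {..<n}"
  shows "(\<Sum>x\<in>Pow A. \<Sum>z\<in>Pow A. (cmod (pauli_expectation n psi x z))\<^sup>2) = 2 ^ card A * purity n psi A"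
proof -
  let ?C = "Pow ({..<n} - A)"
  let ?G = "\<lambda>a a' b b'. cnj (psi (a \<union> b)) * psi (a' \<union> b) * psi (a \<union> b') * cnj (psi (a' \<union> b'))"
  have "complex_of_real (\<Sum>x\<in>Pow A. \<Sum>z\<in>Pow A. (cmod (pauli_expectation n psi x z))\<^sup>2)
          = 2 ^ card A * (\<Sum>x\<in>Pow A. \<Sum>a\<in>Pow A. \<Sum>b\<in>?C. \<Sum>b'\<in>?C.
              cnj (psi (a \<union> b)) * psi (sym_diff (a \<union> b) x)
                * psi (a \<union> b') * cnj (psi (sym_diff (a \<union> b') x)))"
    by (simp only: of_real_sum sum_Z_cmod_sq_pauli_expectation[OF A] sum_distrib_left)
  also have "\<dots> = 2 ^ card A * (\<Sum>a\<in>Pow A. \<Sum>x\<in>Pow A. \<Sum>b\<in>?C. \<Sum>b'\<in>?C. ?G a (sym_diff a x) b b')"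
  proof -
    have shift: "sym_diff (a \<union> b) x = sym_diff a x \<union> b" if "x \<in> Pow A" "b \<in> ?C" for a b x
      using that by auto
    show ?thesis
      by (subst sum.swap[where A = "Pow A" and B = "Pow A"])
         (intro arg_cong[where f = "(*) _"] sum.cong[OF refl], simp only: shift)
  qed
  also have "\<dots> = 2 ^ card A * (\<Sum>a\<in>Pow A. \<Sum>a'\<in>Pow A. \<Sum>b\<in>?C. \<Sum>b'\<in>?C. ?G a a' b b')"
  proof -
    have "(\<Sum>x\<in>Pow A. \<Sum>b\<in>?C. \<Sum>b'\<in>?C. ?G a (sym_diff a x) b b')
            = (\<Sum>a'\<in>Pow A. \<Sum>b\<in>?C. \<Sum>b'\<in>?C. ?G a a' b b')" if "a \<in> Pow A" for a
      by (rule sum.reindex_bij_witness[where i = "sym_diff a" and j = "sym_diff a"])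
         (use that in \<open>auto simp: Un_Diff Diff_Diff_Int\<close>)
    then show ?thesis
      by simp
  qed
  also have "\<dots> = 2 ^ card A * trace_sq n psi A"
    unfolding trace_sq_expand
    by (subst sum.swap[where A = "Pow A" and B = "Pow A"]) (simp add: algebra_simps)
  finally have "Re (complex_of_real (\<Sum>x\<in>Pow A. \<Sum>z\<in>Pow A. (cmod (pauli_expectation n psi x z))\<^sup>2))
                  = Re (2 ^ card A * trace_sq n psi A)"
    by (rule arg_cong)
  then show ?thesis
    by (simp add: purity_eq_Re_trace_sq)
qed

lemma purity_eq_sum_pauli:
  assumes "g \<subseteq> {..<n}"
  shows "purity n psi g = (\<Sum>x\<in>Pow {..<n}. \<Sum>z\<in>Pow {..<n}.
           if x \<union> z \<subseteq> g then (cmod (pauli_expectation n psi x z))\<^sup>2 else 0) / 2 ^ card g"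
proof -
  have restrict: "(\<Sum>x\<in>Pow g. f x) = (\<Sum>x\<in>Pow {..<n}. if x \<subseteq> g then f x else 0)" for f :: "nat set \<Rightarrow> real"
  proof -
    have "{x\<in>Pow {..<n}. x \<subseteq> g} = Pow g"
      using assms by auto
    then show ?thesis
      using sum.inter_filter[of "Pow {..<n}" f "\<lambda>x. x \<subseteq> g"] by simp
  qed
  have "2 ^ card g * purity n psi g = (\<Sum>x\<in>Pow {..<n}. \<Sum>z\<in>Pow {..<n}.
          if x \<union> z \<subseteq> g then (cmod (pauli_expectation n psi x z))\<^sup>2 else 0)"
    unfolding sum_Pow_cmod_sq_pauli_expectation[OF assms, symmetric] restrict
    by (intro sum.cong refl) auto
  then show ?thesis
    by (simp add: field_simps)
qed

definition swap_test_pauli_coeff :: "nat \<Rightarrow> nat set \<Rightarrow> nat set \<Rightarrow> real" where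
  "swap_test_pauli_coeff n T B =
     (\<Sum>g\<in>Pow {..<n}. if B \<subseteq> g then (-1) ^ card (g \<inter> T) / 2 ^ card g else 0) / 2 ^ n"

lemma swap_test_prob_eq_sum_pauli:
  "swap_test_prob n psi T = (\<Sum>x\<in>Pow {..<n}. \<Sum>z\<in>Pow {..<n}.
     (cmod (pauli_expectation n psi x z))\<^sup>2 * swap_test_pauli_coeff n T (x \<union> z))"
proof -
  let ?U = "Pow {..<n}"
  let ?w = "\<lambda>x z. (cmod (pauli_expectation n psi x z))\<^sup>2"
  let ?c = "\<lambda>g B. (if B \<subseteq> g then (-1) ^ card (g \<inter> T) / 2 ^ card g else 0) / (2::real) ^ n"
  have "(-1) ^ card (g \<inter> T) * purity n psi g / 2 ^ n = (\<Sum>x\<in>?U. \<Sum>z\<in>?U. ?w x z * ?c g (x \<union> z))"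
    if "g \<in> ?U" for g
  proof -
    have "(-1) ^ card (g \<inter> T) * purity n psi g / 2 ^ n
            = (\<Sum>x\<in>?U. \<Sum>z\<in>?U. (-1) ^ card (g \<inter> T) * (if x \<union> z \<subseteq> g then ?w x z else 0) / 2 ^ card g / 2 ^ n)"
      using that by (simp add: purity_eq_sum_pauli sum_distrib_left sum_divide_distrib)
    also have "\<dots> = (\<Sum>x\<in>?U. \<Sum>z\<in>?U. ?w x z * ?c g (x \<union> z))"
      by (intro sum.cong refl) simp
    finally show ?thesis .
  qed
  then have "swap_test_prob n psi T = (\<Sum>g\<in>?U. \<Sum>x\<in>?U. \<Sum>z\<in>?U. ?w x z * ?c g (x \<union> z))"
    unfolding swap_test_prob_def sum_divide_distrib by simp
  also have "\<dots> = (\<Sum>x\<in>?U. \<Sum>z\<in>?U. \<Sum>g\<in>?U. ?w x z * ?c g (x \<union> z))"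
    by (subst sum.swap) (rule sum.cong[OF refl], rule sum.swap)
  also have "\<dots> = (\<Sum>x\<in>?U. \<Sum>z\<in>?U. ?w x z * swap_test_pauli_coeff n T (x \<union> z))"
    unfolding swap_test_pauli_coeff_def
    by (intro sum.cong refl) (simp add: sum_distrib_left sum_divide_distrib)
  finally show ?thesis .
qed

text \<open>The factor contributed by qubit \<open>k\<close> to the summand of \<open>kraw_pauli_coeff_nonneg\<close> below,
  where \<open>m\<close> and \<open>t\<close> record whether \<open>k \<in> g\<close> and \<open>k \<in> T\<close>.\<close>

definition kraw_qubit_factor :: "nat set \<Rightarrow> nat set \<Rightarrow> nat \<Rightarrow> bool \<Rightarrow> bool \<Rightarrow> real" where
  "kraw_qubit_factor S B k m t =
     (if t then -1 else 1) * (if k \<in> S \<and> t then -1 else 1) * (if m \<and> t then -1 else 1)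
       * (if k \<in> S \<and> \<not> t then 3 else 1) * (if \<not> t then 1 / 3 else 1)
       * (if m then 1 / 2 else 1) * (if k \<in> B \<and> \<not> m then 0 else 1)"

lemma prod_kraw_qubit_factor:
  assumes "S \<subseteq> {..<n}" "B \<subseteq> {..<n}" "g \<subseteq> {..<n}" "T \<subseteq> {..<n}"
  shows "(\<Prod>k<n. kraw_qubit_factor S B k (k \<in> g) (k \<in> T))
           = (-1) ^ card T * (-1) ^ card (S \<inter> T) * 3 ^ card (S - T) / 3 ^ (n - card T)
               * (if B \<subseteq> g then (-1) ^ card (g \<inter> T) / 2 ^ card g else 0)"
proof -
  let ?N = "{..<n}"
  have sets: "{k\<in>?N. k \<in> T} = T" "{k\<in>?N. k \<in> S \<and> k \<in> T} = S \<inter> T"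
    "{k\<in>?N. k \<in> g \<and> k \<in> T} = g \<inter> T" "{k\<in>?N. k \<in> S \<and> k \<notin> T} = S - T"
    "{k\<in>?N. k \<notin> T} = ?N - T" "{k\<in>?N. k \<in> g} = g" "{k\<in>?N. k \<in> B \<and> k \<notin> g} = B - g"
    using assms by auto
  have "card (?N - T) = n - card T"
    using assms by (simp add: card_Diff_subset finite_subset)
  moreover have "finite (B - g)"
    using assms finite_subset by blast
  then have "(0::real) ^ card (B - g) = (if B \<subseteq> g then 1 else 0)"
    by (simp add: power_0_left card_eq_0_iff)
  ultimately show ?thesis
    unfolding kraw_qubit_factor_def prod.distrib prod_if_eq_power_card[OF finite_lessThan] sets
    by (simp add: power_one_over mult_ac)
qed

lemma kraw_pauli_coeff_nonneg:
  assumes "S \<subseteq> {..<n}" "B \<subseteq> {..<n}"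
  shows "0 \<le> (\<Sum>T\<in>Pow {..<n}. (-1) ^ card T * (-1) ^ card (S \<inter> T) * 3 ^ card (S - T)
                 / 3 ^ (n - card T) * swap_test_pauli_coeff n T B)"
proof -
  let ?N = "{..<n}"
  let ?f = "kraw_qubit_factor S B"
  have "(\<Sum>T\<in>Pow ?N. (-1) ^ card T * (-1) ^ card (S \<inter> T) * 3 ^ card (S - T)
                 / 3 ^ (n - card T) * swap_test_pauli_coeff n T B)
          = (\<Sum>T\<in>Pow ?N. \<Sum>g\<in>Pow ?N. (-1) ^ card T * (-1) ^ card (S \<inter> T) * 3 ^ card (S - T)
                 / 3 ^ (n - card T) * (if B \<subseteq> g then (-1) ^ card (g \<inter> T) / 2 ^ card g else 0)) / 2 ^ n"
    unfolding swap_test_pauli_coeff_def by (simp add: sum_distrib_left sum_divide_distrib)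
  also have "\<dots> = (\<Sum>g\<in>Pow ?N. \<Sum>T\<in>Pow ?N. \<Prod>k\<in>?N. ?f k (k \<in> g) (k \<in> T)) / 2 ^ n"
    using assms by (subst sum.swap) (simp add: prod_kraw_qubit_factor)
  also have "\<dots> = (\<Prod>k\<in>?N. ?f k True True + ?f k True False + ?f k False True + ?f k False False) / 2 ^ n"
    by (simp only: sum_Pow_Pow_prod_mem[OF finite_lessThan])
  also have "\<dots> \<ge> 0"
    by (intro divide_nonneg_pos prod_nonneg) (auto simp: kraw_qubit_factor_def)
  finally show ?thesis .
qed

lemma sum_kraw_swap_test_prob_nonneg:
  "0 \<le> (\<Sum>T\<in>Pow {..<n}. (-1) ^ card T * kraw n i (card T) * swap_test_prob n psi T / 3 ^ (n - card T))"
proof -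
  let ?U = "Pow {..<n}"
  let ?A = "{S\<in>Pow {..<n}. card S = i}"
  let ?k = "\<lambda>S T. (-1) ^ card T * (-1) ^ card (S \<inter> T) * 3 ^ card (S - T) / 3 ^ (n - card T) :: real"
  let ?w = "\<lambda>x z. (cmod (pauli_expectation n psi x z))\<^sup>2"
  let ?F = "\<lambda>S T x z. ?w x z * (?k S T * swap_test_pauli_coeff n T (x \<union> z))"
  have "(\<Sum>T\<in>?U. (-1) ^ card T * kraw n i (card T) * swap_test_prob n psi T / 3 ^ (n - card T))
          = (\<Sum>T\<in>?U. \<Sum>S\<in>?A. \<Sum>x\<in>?U. \<Sum>z\<in>?U. ?F S T x z)"
    by (intro sum.cong refl)
       (simp add: kraw_eq_sum_subsets swap_test_prob_eq_sum_pauli sum_distrib_left sum_distrib_right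
          sum_divide_distrib mult_ac)
  also have "\<dots> = (\<Sum>S\<in>?A. \<Sum>T\<in>?U. \<Sum>x\<in>?U. \<Sum>z\<in>?U. ?F S T x z)"
    by (rule sum.swap)
  also have "\<dots> = (\<Sum>S\<in>?A. \<Sum>x\<in>?U. \<Sum>T\<in>?U. \<Sum>z\<in>?U. ?F S T x z)"
    by (rule sum.cong[OF refl], rule sum.swap)
  also have "\<dots> = (\<Sum>S\<in>?A. \<Sum>x\<in>?U. \<Sum>z\<in>?U. \<Sum>T\<in>?U. ?F S T x z)"
    by (rule sum.cong[OF refl], rule sum.cong[OF refl], rule sum.swap)
  also have "\<dots> = (\<Sum>S\<in>?A. \<Sum>x\<in>?U. \<Sum>z\<in>?U.
                     ?w x z * (\<Sum>T\<in>?U. ?k S T * swap_test_pauli_coeff n T (x \<union> z)))"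
    by (simp only: sum_distrib_left)
  also have "\<dots> \<ge> 0"
    by (intro sum_nonneg mult_nonneg_nonneg zero_le_power2 kraw_pauli_coeff_nonneg) auto
  finally show ?thesis .
qed

section \<open>The feasible point of the linear program\<close>

lemma sum_even_card_swap_test_prob:
  "(\<Sum>T\<in>{T\<in>Pow {..<n}. even (card T)}. h T * swap_test_prob n psi T)
     = (\<Sum>T\<in>Pow {..<n}. h T * swap_test_prob n psi T)"
  by (rule sum.mono_neutral_left) (auto simp: swap_test_prob_odd)

definition lp_witness :: "nat \<Rightarrow> (nat set \<Rightarrow> complex) \<Rightarrow> nat \<Rightarrow> real" where
  "lp_witness n psi j =
     (\<Sum>T\<in>{T\<in>Pow {..<n}. card T = 2 * j}. swap_test_prob n psi T) / 3 ^ (n - 2 * j)"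

lemma lp_feasible_lp_witness:
  assumes "pure_state n psi"
  shows "lp_feasible n (lp_witness n psi)"
  unfolding lp_feasible_def
proof (intro conjI allI impI)
  fix j
  show "0 \<le> lp_witness n psi j"
    unfolding lp_witness_def by (intro divide_nonneg_pos sum_nonneg swap_test_prob_nonneg) auto
next
  fix i
  have "(\<Sum>j=0..n div 2. kraw n i (2 * j) * lp_witness n psi j)
          = (\<Sum>T\<in>{T\<in>Pow {..<n}. even (card T)}.
               kraw n i (card T) / 3 ^ (n - card T) * swap_test_prob n psi T)"
    unfolding lp_witness_def sum_Pow_even_card[symmetric] sum_distrib_left sum_divide_distrib
    by (intro sum.cong refl) simp
  also have "\<dots> = (\<Sum>T\<in>{T\<in>Pow {..<n}. even (card T)}.
                     (-1) ^ card T * kraw n i (card T) / 3 ^ (n - card T) * swap_test_prob n psi T)"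
    by (intro sum.cong refl) simp
  also have "\<dots> = (\<Sum>T\<in>Pow {..<n}. (-1) ^ card T * kraw n i (card T) * swap_test_prob n psi T / 3 ^ (n - card T))"
    by (simp only: sum_even_card_swap_test_prob) (simp add: field_simps)
  also have "\<dots> \<ge> 0"
    by (rule sum_kraw_swap_test_prob_nonneg)
  finally show "0 \<le> (\<Sum>j=0..n div 2. kraw n i (2 * j) * lp_witness n psi j)" .
next
  have "(\<Sum>j=0..n div 2. 3 ^ (n - 2 * j) * lp_witness n psi j)
          = (\<Sum>T\<in>{T\<in>Pow {..<n}. even (card T)}. 1 * swap_test_prob n psi T)"
    unfolding lp_witness_def sum_Pow_even_card[symmetric] by simp
  also have "\<dots> = 1"
    by (simp only: sum_even_card_swap_test_prob) (simp add: sum_swap_test_prob[OF assms])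
  finally show "(\<Sum>j=0..n div 2. 3 ^ (n - 2 * j) * lp_witness n psi j) = 1" .
qed

lemma lp_witness_objective: "3 ^ n * lp_witness n psi 0 = 1 - conc_ent n psi"
proof -
  have "{T\<in>Pow {..<n}. card T = 0} = {{}}"
    by (auto simp: card_eq_0_iff finite_subset)
  then show ?thesis
    by (simp add: lp_witness_def swap_test_prob_empty)
qed

lemma LP_val_le:
  assumes "lp_feasible n y"
  shows "LP_val n \<le> 3 ^ n * y 0"
proof -
  have "bdd_below ((\<lambda>y. 3 ^ n * y 0) ` {y. lp_feasible n y})"
    by (rule bdd_belowI[where m = 0]) (auto simp: lp_feasible_def)
  then show ?thesis
    unfolding LP_val_def using assms by (intro cINF_lower) auto
qed

lemma conc_ent_le_one_minus_LP_val:
  assumes "pure_state n psi"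
  shows "conc_ent n psi \<le> 1 - LP_val n"
  using LP_val_le[OF lp_feasible_lp_witness[OF assms]] lp_witness_objective[of n psi] by simp

lemma pure_state_basis: "pure_state n (\<lambda>u. if u = {} then 1 else 0)"
proof -
  have "(\<Sum>u\<in>Pow {..<n}. (cmod (if u = {} then 1 else 0))\<^sup>2) = (\<Sum>u\<in>Pow {..<n}. if u = {} then 1 else 0)"
    by (intro sum.cong) auto
  then show ?thesis
    unfolding pure_state_def by simp
qed

theorem mainTheorem11:
  fixes n :: nat
  assumes "n \<ge> 1"
  shows "conc_ent_max n \<le> 1 - LP_val n"
  unfolding conc_ent_max_def
  using pure_state_basis conc_ent_le_one_minus_LP_val by (intro cSUP_least) auto

end
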